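(* Let $2\le s\le k$, $h>0$, $q_0,p_0\in\mathbb{R}^m$. If polynomials $u,v$ of degree at most $s$ satisfy the LIM$(k,s)$ equations, then the block vector $\boldsymbol\psi=(\psi_0;\dots;\psi_{s-1})\in\mathbb{R}^{sm}$ with $\psi_i=\sum_{j=0}^{s-1}\hat\rho_{ij}(u)\hat\gamma_j(v)-\hat\eta_i(u)$ satisfies the discrete equation (D) below, and $$q_1=u(h)=q_0+hp_0+\frac{h^2}{2}\Big(\psi_0-\frac{1}{\sqrt3}\psi_1\right),\qquad p_1=v(h)=p_0+h\psi_0 .$$ Conversely, if $\boldsymbol\psi$ solves (D), then defining $\hat\gamma=(e_1\otimes p_0)+h(X_s\otimes I_m)\boldsymbol\psi$ (blocks $\hat\gamma_0,\dots,\hat\gamma_{s-1}$), $u(ch)=q_0+h\sum_i(\int_0^cP_i)\hat\gamma_i$, $v(ch)=p_0+h\sum_i(\int_0^cP_i)\psi_i$ yields polynomials satisfying the LIM$(k,s)$ equations.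
   Context: $U:\mathbb{R}^m\to\mathbb{R}$ is $C^1$, $B:\mathbb{R}^m\to\mathbb{R}^{m\times m}$ continuous, $B(q)^\top=-B(q)$. $\{P_j\}$ orthonormal Legendre basis on $[0,1]$ ($\deg P_j=j$, $\int_0^1P_iP_j=\delta_{ij}$). $(\hat c_\ell,\hat b_\ell)_{\ell=1}^s$ and $(c_\ell,b_\ell)_{\ell=1}^k$: nodes/weights of the $s$- and $k$-point Gauss–Legendre rules on $[0,1]$. Quadrature-based coefficients: $\hat\gamma_i(v)=\sum_{\ell=1}^s\hat b_\ell P_i(\hat c_\ell)v(\hat c_\ell h)$, $\hat\rho_{ij}(u)=\sum_{\ell=1}^s\hat b_\ell P_i(\hat c_\ell)P_j(\hat c_\ell)B(u(\hat c_\ell h))$, $\hat\eta_i(u)=\sum_{\ell=1}^kb_\ell P_i(c_\ell)\nabla U(u(c_\ell h))$. LIM$(k,s)$ equations: for all $c\in[0,1]$, $u(ch)=q_0+h\sum_{i=0}^{s-1}(\int_0^cP_i)\hat\gamma_i(v)$, $v(ch)=p_0+h\sum_{i=0}^{s-1}(\int_0^cP_i)[-\hat\eta_i(u)+\sum_{j=0}^{s-1}\hat\rho_{ij}(u)\hat\gamma_j(v)]$; $q_1=u(h)$, $p_1=v(h)$. Matrices: $\hat{\cal P}_s=(P_{j-1}(\hat c_i))\in\mathbb{R}^{s\times s}$, $\hat{\cal I}_s=(\int_0^{\hat c_i}P_{j-1})\in\mathbb{R}^{s\times s}$, ${\cal P}_s=(P_{j-1}(c_i))\in\mathbb{R}^{k\times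 s}$, ${\cal I}_s=(\int_0^{c_i}P_{j-1})\in\mathbb{R}^{k\times s}$, $\hat\Omega=\mathrm{diag}(\hat b_1,\dots,\hat b_s)$, $\Omega=\mathrm{diag}(b_1,\dots,b_k)$; $X_s\in\mathbb{R}^{s\times s}$ tridiagonal with $(X_s)_{11}=\xi_0$, $(X_s)_{i+1,i}=\xi_i$, $(X_s)_{i,i+1}=-\xi_i$ ($i=1,\dots,s-1$), other entries $0$, where $\xi_i=(2\sqrt{|4i^2-1|})^{-1}$. $\hat{\mathbf c}=(\hat c_1,\dots,\hat c_s)^\top$, $\mathbf c=(c_1,\dots,c_k)^\top$, $\mathbf 1_r=(1,\dots,1)^\top\in\mathbb{R}^r$, $e_1=(1,0,\dots,0)^\top\in\mathbb{R}^s$, $I_m$ the $m\times m$ identity. For a block vector $x=(x_1;\dots;x_s)$, $x_\ell\in\mathbb{R}^m$, $\mathcal B(x)=\mathrm{blockdiag}(B(x_1),\dots,B(x_s))$; $\nabla U$ of a block vector $(y_1;\dots;y_k)$ is $(\nabla U(y_1);\dots;\nabla U(y_k))$. Equation (D): $$\boldsymbol\psi=(\hat{\cal P}_s^\top\hat\Omega\otimes I_m)\Big[\mathcal B\big(\mathbf 1_s\otimes q_0+h\hat{\mathbf c}\otimes p_0+h^2(\hat{\cal I}_sX_s\otimes I_m)\boldsymbol\psi\big)\big(\mathbf 1_s\otimes p_0+h(\hat{\cal I}_s\otimes I_m)\boldsymbol\psi\big)\Big]-({\cal P}_s^\top\Omega\otimes I_m)\nabla U\big(\mathbf 1_k\otimes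 q_0+h\mathbf c\otimes p_0+h^2({\cal I}_sX_s\otimes I_m)\boldsymbol\psi\big).$$ *)

theory Defs
  imports "HOL-Analysis.Analysis"
begin

text \<open>Orthonormal shifted Legendre polynomials on [0,1] (positive leading coefficient):
  legP n x = sqrt(2n+1) * L_n(2x-1), L_n the classical Legendre polynomial.\<close>
definition legP :: "nat \<Rightarrow> real \<Rightarrow> real" where
  "legP n x = sqrt (2 * real n + 1) *
     (\<Sum>k\<le>n. (-1) ^ (n + k) * real (n choose k) * real ((n + k) choose k) * x ^ k)"

definition intP :: "nat \<Rightarrow> real \<Rightarrow> real" where
  "intP i c = interval_lebesgue_integral lborel (ereal 0) (ereal c) (legP i)"

definition gl_node :: "nat \<Rightarrow> nat \<Rightarrow> real" where
  "gl_node n l = sorted_list_of_set {x. legP n x = 0} ! l"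

definition gl_weight :: "nat \<Rightarrow> nat \<Rightarrow> real" where
  "gl_weight n l = integral {0..1}
     (\<lambda>x. \<Prod>j\<in>{0..<n} - {l}. (x - gl_node n j) / (gl_node n l - gl_node n j))"

text \<open>xi_i and the tridiagonal matrix X_s (0-based indices; only entries with i,j < s are used).\<close>
definition xi :: "nat \<Rightarrow> real" where
  "xi i = 1 / (2 * sqrt \<bar>4 * (real i)^2 - 1\<bar>)"

definition Xmat :: "nat \<Rightarrow> nat \<Rightarrow> real" where
  "Xmat i j = (if i = 0 \<and> j = 0 then xi 0
               else if i = j + 1 then xi i
               else if j = i + 1 then - xi j
               else 0)"

definition is_vpoly :: "nat \<Rightarrow> (real \<Rightarrow> 'a::real_vector) \<Rightarrow> bool" where
  "is_vpoly n u \<longleftrightarrow> (\<exists>a. \<forall>t. u t = (\<Sum>j\<le>n. t ^ j *\<^sub>R a j))"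

definition gam_hat :: "nat \<Rightarrow> real \<Rightarrow> (real \<Rightarrow> real^'m) \<Rightarrow> nat \<Rightarrow> real^'m" where
  "gam_hat s h v i = (\<Sum>l<s. (gl_weight s l * legP i (gl_node s l)) *\<^sub>R v (gl_node s l * h))"

definition rho_hat :: "(real^'m \<Rightarrow> real^'m^'m) \<Rightarrow> nat \<Rightarrow> real \<Rightarrow> (real \<Rightarrow> real^'m)
    \<Rightarrow> nat \<Rightarrow> nat \<Rightarrow> real^'m^'m" where
  "rho_hat B s h u i j = (\<Sum>l<s. (gl_weight s l * legP i (gl_node s l) * legP j (gl_node s l))
                                   *\<^sub>R B (u (gl_node s l * h)))"

definition eta_hat :: "(real^'m \<Rightarrow> real^'m) \<Rightarrow> nat \<Rightarrow> real \<Rightarrow> (real \<Rightarrow> real^'m) \<Rightarrow> nat \<Rightarrow> real^'m" where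
  "eta_hat gU k h u i = (\<Sum>l<k. (gl_weight k l * legP i (gl_node k l)) *\<^sub>R gU (u (gl_node k l * h)))"

definition LIM_eqs :: "(real^'m \<Rightarrow> real^'m) \<Rightarrow> (real^'m \<Rightarrow> real^'m^'m) \<Rightarrow> nat \<Rightarrow> nat \<Rightarrow> real
    \<Rightarrow> real^'m \<Rightarrow> real^'m \<Rightarrow> (real \<Rightarrow> real^'m) \<Rightarrow> (real \<Rightarrow> real^'m) \<Rightarrow> bool" where
  "LIM_eqs gU B k s h q0 p0 u v \<longleftrightarrow>
     (\<forall>c\<in>{0..1}.
        u (c * h) = q0 + h *\<^sub>R (\<Sum>i<s. intP i c *\<^sub>R gam_hat s h v i) \<and>
        v (c * h) = p0 + h *\<^sub>R (\<Sum>i<s. intP i c *\<^sub>R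
              (- eta_hat gU k h u i + (\<Sum>j<s. rho_hat B s h u i j *v gam_hat s h v j))))"

text \<open>Matrix I (nodes of the n-point rule) times X_s, entry (l,j), with s columns.\<close>
definition IX :: "nat \<Rightarrow> nat \<Rightarrow> nat \<Rightarrow> nat \<Rightarrow> real" where
  "IX n s l j = (\<Sum>r<s. intP r (gl_node n l) * Xmat r j)"

text \<open>Equation (D), written block-wise: psi i is the i-th block (i = 0..s-1).\<close>
definition eqD :: "(real^'m \<Rightarrow> real^'m) \<Rightarrow> (real^'m \<Rightarrow> real^'m^'m) \<Rightarrow> nat \<Rightarrow> nat \<Rightarrow> real
    \<Rightarrow> real^'m \<Rightarrow> real^'m \<Rightarrow> (nat \<Rightarrow> real^'m) \<Rightarrow> bool" where
  "eqD gU B k s h q0 p0 psi \<longleftrightarrow>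
     (\<forall>i<s. psi i =
        (\<Sum>l<s. (gl_weight s l * legP i (gl_node s l)) *\<^sub>R
           (B (q0 + (h * gl_node s l) *\<^sub>R p0 + h^2 *\<^sub>R (\<Sum>j<s. IX s s l j *\<^sub>R psi j))
            *v (p0 + h *\<^sub>R (\<Sum>j<s. intP j (gl_node s l) *\<^sub>R psi j))))
      - (\<Sum>l<k. (gl_weight k l * legP i (gl_node k l)) *\<^sub>R
           gU (q0 + (h * gl_node k l) *\<^sub>R p0 + h^2 *\<^sub>R (\<Sum>j<s. IX k s l j *\<^sub>R psi j))))"

end

theory Submission
  imports Defs "HOL-Computational_Algebra.Polynomial"
begin

text \<open>The shifted Legendre polynomials are orthonormal on [0,1] (Rodrigues' formula and
  integration by parts), and the s-point Gauss rule, whose nodes are the s roots of P_s in (0,1),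
  is exact up to degree 2s - 1. Since P_i \<cdot> \<integral>_0^c P_j has degree at most 2s - 1
  and \<integral>_0^1 P_i(c) \<integral>_0^c P_j = (X_s)_ij, the quadrature coefficients of
  v(ch) = p_0 + h \<Sum>_j \<psi>_j \<integral>_0^c P_j are \<gamma>_i = \<delta>_i0 p_0 + h \<Sum>_j (X_s)_ij \<psi>_j.
  Substituting them into u gives the stage values of (D), and at the nodes
  \<Sum>_j P_j \<gamma>_j reproduces v, because \<integral>_0^c P_m = \<Sum>_j<s (X_s)_jm P_j(c) + a multiple of P_s.
  So the LIM(k,s) equations in u, v and equation (D) in \<psi> are the same equations;
  the end-point formulas follow from \<integral>_0^1 P_i = \<delta>_i0.\<close>

section \<open>Polynomial integrals over [0,1]\<close>

lemma poly_as_sum_coeff_le: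
  fixes p :: "real poly"
  assumes "degree p \<le> N"
  shows "poly p x = (\<Sum>i\<le>N. coeff p i * x ^ i)"
proof -
  have "poly p x = (\<Sum>i\<le>degree p. coeff p i * x ^ i)"
    by (rule poly_altdef)
  also have "\<dots> = (\<Sum>i\<le>N. coeff p i * x ^ i)"
    using assms by (intro sum.mono_neutral_left) (auto simp: coeff_eq_0)
  finally show ?thesis .
qed

definition unit_integral :: "real poly \<Rightarrow> real" where
  "unit_integral p = integral {0..1} (poly p)"

definition poly_antideriv :: "real poly \<Rightarrow> real poly" where
  "poly_antideriv p = (\<Sum>i\<le>degree p. monom (coeff p i / real (Suc i)) (Suc i))"

lemma coeff_poly_antideriv_Suc: "coeff (poly_antideriv p) (Suc k) = coeff p k / real (Suc k)"
  by (auto simp: poly_antideriv_def coeff_sum coeff_monom coeff_eq_0)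

lemma coeff_poly_antideriv_0 [simp]: "coeff (poly_antideriv p) 0 = 0"
  by (simp add: poly_antideriv_def coeff_sum coeff_monom)

lemma pderiv_poly_antideriv [simp]: "pderiv (poly_antideriv p) = p"
  by (simp add: poly_eq_iff coeff_pderiv coeff_poly_antideriv_Suc del: of_nat_Suc)

lemma poly_antideriv_at_0 [simp]: "poly (poly_antideriv p) 0 = 0"
  by (simp add: poly_0_coeff_0)

lemma degree_poly_antideriv: "degree (poly_antideriv p) \<le> Suc (degree p)"
proof (rule degree_le, intro allI impI)
  fix k assume "Suc (degree p) < k"
  then show "coeff (poly_antideriv p) k = 0"
    by (cases k) (auto simp: coeff_poly_antideriv_Suc coeff_eq_0)
qed

lemma has_integral_poly_pderiv:
  "(poly (pderiv F) has_integral (poly F 1 - poly F 0)) {0..1::real}"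
proof (rule fundamental_theorem_of_calculus)
  fix x :: real
  show "(poly F has_vector_derivative poly (pderiv F) x) (at x within {0..1})"
    unfolding has_real_derivative_iff_has_vector_derivative[symmetric]
    by (rule has_field_derivative_at_within[OF poly_DERIV])
qed simp

lemma unit_integral_pderiv: "unit_integral (pderiv F) = poly F 1 - poly F 0"
  unfolding unit_integral_def by (rule integral_unique[OF has_integral_poly_pderiv])

lemma poly_integrable_on_unit: "poly p integrable_on {0..1::real}"
  using has_integral_poly_pderiv[of "poly_antideriv p"] by (auto intro: has_integral_integrable)

lemma unit_integral_add: "unit_integral (p + q) = unit_integral p + unit_integral q"
  unfolding unit_integral_def poly_add
  by (rule integral_add[OF poly_integrable_on_unit poly_integrable_on_unit])

lemma unit_integral_diff: "unit_integral (p - q) = unit_integral p - unit_integral q"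
  unfolding unit_integral_def poly_diff
  by (rule integral_diff[OF poly_integrable_on_unit poly_integrable_on_unit])

lemma unit_integral_smult: "unit_integral (smult c p) = c * unit_integral p"
  unfolding unit_integral_def poly_smult by (rule integral_mult_right)

lemma unit_integral_0 [simp]: "unit_integral 0 = 0"
  using unit_integral_smult[of 0 0] by simp

lemma unit_integral_sum: "unit_integral (\<Sum>i\<in>A. f i) = (\<Sum>i\<in>A. unit_integral (f i))"
  by (induction A rule: infinite_finite_induct) (simp_all add: unit_integral_add)

lemma unit_integral_by_parts:
  "unit_integral (pderiv f * g) =
     poly f 1 * poly g 1 - poly f 0 * poly g 0 - unit_integral (f * pderiv g)"
  using unit_integral_pderiv[of "f * g"] by (simp add: pderiv_mult unit_integral_add mult.commute)

lemma unit_integral_monom: "unit_integral (monom c a) = c / real (Suc a)"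
proof -
  have "pderiv (monom (c / real (Suc a)) (Suc a)) = monom c a"
    by (simp add: pderiv_monom del: of_nat_Suc)
  then show ?thesis
    using unit_integral_pderiv[of "monom (c / real (Suc a)) (Suc a)"] by (simp add: poly_monom)
qed

lemma unit_integral_beta:
  "unit_integral (monom 1 a * [:-1, 1:] ^ b) = (-1) ^ b * fact a * fact b / fact (a + b + 1)"
proof (induction b arbitrary: a)
  case 0
  then show ?case by (simp add: unit_integral_monom)
next
  case (Suc b)
  define f where "f = monom (1 / real (Suc a)) (Suc a)"
  have "unit_integral (monom 1 a * [:-1, 1:] ^ Suc b) = - unit_integral (f * pderiv ([:-1, 1:] ^ Suc b))"
    using unit_integral_by_parts[of f "[:-1, 1:] ^ Suc b"]
    by (simp add: f_def pderiv_monom poly_monom del: of_nat_Suc power_Suc)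
  also have "f * pderiv ([:-1, 1:] ^ Suc b) =
      smult (real (Suc b) / real (Suc a)) (monom 1 (Suc a) * [:-1, 1:] ^ b)"
  proof -
    have "f = smult (1 / real (Suc a)) (monom 1 (Suc a))"
      by (simp add: f_def smult_monom)
    then show ?thesis
      by (simp add: pderiv_power_Suc pderiv_pCons mult.commute del: power_Suc of_nat_Suc)
  qed
  finally show ?case
    by (simp add: unit_integral_smult Suc field_simps del: of_nat_Suc)
qed

section \<open>Shifted Legendre polynomials\<close>

definition rodrigues_poly :: "nat \<Rightarrow> real poly" where
  "rodrigues_poly n = (pderiv ^^ n) ([:0, -1, 1:] ^ n)"

definition legendre_poly :: "nat \<Rightarrow> real poly" where
  "legendre_poly n = smult (sqrt (2 * real n + 1) / fact n) (rodrigues_poly n)"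

lemma rodrigues_base_eq: "[:0, -1, 1:] ^ n = (monom 1 n * [:-1, 1:] ^ n :: real poly)"
proof -
  have "[:0, -1, 1:] ^ n = [:0, 1:] ^ n * [:-1::real, 1:] ^ n"
    by (simp flip: power_mult_distrib)
  then show ?thesis
    by (simp add: monom_altdef)
qed

lemma pochhammer_of_nat_Suc: "pochhammer (real (Suc k)) n = fact (k + n) / fact k"
proof -
  have "fact (k + n) = fact k * pochhammer (real (Suc k)) n"
    using pochhammer_product'[of "1::real" k n] by (simp add: pochhammer_fact add.commute)
  then show ?thesis
    by simp
qed

lemma coeff_rodrigues_poly:
  "coeff (rodrigues_poly n) k =
     (if k \<le> n then fact (k + n) / fact k * real (n choose k) * (-1) ^ (n - k) else 0)"
proof -
  have "coeff ([:-1, 1:] ^ n) k = (if k \<le> n then real (n choose k) * (-1) ^ (n - k) else 0)"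
    using coeff_linear_poly_power[of k n "-1::real" 1]
    by (auto simp: coeff_eq_0 degree_power_le le_less_trans[OF degree_power_le])
  then show ?thesis
    unfolding rodrigues_poly_def coeff_higher_pderiv pochhammer_of_nat_Suc
    by (simp add: rodrigues_base_eq coeff_monom_mult)
qed

lemma degree_rodrigues_poly: "degree (rodrigues_poly n) \<le> n"
  by (rule degree_le) (simp add: coeff_rodrigues_poly)

lemma poly_legendre_poly: "poly (legendre_poly n) = legP n"
proof
  fix x
  have coeff: "sqrt (2 * real n + 1) / fact n * coeff (rodrigues_poly n) k =
      sqrt (2 * real n + 1) * ((-1) ^ (n + k) * real (n choose k) * real ((n + k) choose k))"
    if "k \<le> n" for k
  proof -
    have "(-1::real) ^ (n - k) = (-1) ^ (n + k)"
      using that by (simp add: minus_one_power_iff)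
    moreover have "real ((n + k) choose k) = fact (n + k) / (fact k * fact n)"
      using binomial_fact[of k "n + k"] by simp
    ultimately show ?thesis
      using that by (simp add: coeff_rodrigues_poly add.commute mult_ac)
  qed
  have "poly (legendre_poly n) x =
      (\<Sum>k\<le>n. (sqrt (2 * real n + 1) / fact n * coeff (rodrigues_poly n) k) * x ^ k)"
    by (simp add: legendre_poly_def poly_as_sum_coeff_le[OF degree_rodrigues_poly]
        sum_distrib_left mult.assoc)
  also have "\<dots> = legP n x"
    unfolding legP_def sum_distrib_left
  proof (intro sum.cong refl)
    fix k assume "k \<in> {..n}"
    then show "sqrt (2 * real n + 1) / fact n * coeff (rodrigues_poly n) k * x ^ k =
        sqrt (2 * real n + 1) * ((-1) ^ (n + k) * real (n choose k) * real ((n + k) choose k) * x ^ k)"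
      by (simp only: atMost_iff coeff)
  qed
  finally show "poly (legendre_poly n) x = legP n x" .
qed

lemma higher_pderiv_degree_le:
  assumes "degree q \<le> n"
  shows "(pderiv ^^ n) q = [:fact n * coeff q n:]"
proof (rule poly_eqI)
  fix k
  show "coeff ((pderiv ^^ n) q) k = coeff [:fact n * coeff q n:] k"
  proof (cases k)
    case 0
    then show ?thesis
      by (simp add: coeff_higher_pderiv pochhammer_fact)
  next
    case (Suc k')
    then show ?thesis
      using assms by (simp add: coeff_higher_pderiv coeff_eq_0)
  qed
qed

lemma power_Suc_dvd_imp_dvd_pderiv:
  assumes "p ^ Suc k dvd f"
  shows "p ^ k dvd pderiv f"
proof -
  obtain g where g: "f = p ^ Suc k * g"
    using assms by (auto elim: dvdE)
  have "pderiv f = p ^ k * (smult (of_nat (Suc k)) (pderiv p) * g + p * pderiv g)"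
    unfolding g pderiv_mult pderiv_power_Suc by (simp add: algebra_simps)
  then show ?thesis
    by simp
qed

lemma dvd_higher_pderiv_rodrigues_base:
  "j \<le> n \<Longrightarrow> [:0, -1, 1:] ^ (n - j) dvd (pderiv ^^ j) ([:0, -1, 1:] ^ n :: real poly)"
proof (induction j)
  case (Suc j)
  then show ?case
    using power_Suc_dvd_imp_dvd_pderiv[of _ "n - Suc j"] by (simp add: Suc_diff_Suc)
qed simp

lemma higher_pderiv_rodrigues_base_at_0_1:
  assumes "j < n"
  shows "poly ((pderiv ^^ j) ([:0, -1, 1:] ^ n)) 0 = (0::real)"
    and "poly ((pderiv ^^ j) ([:0, -1, 1:] ^ n)) 1 = (0::real)"
proof -
  obtain r where r: "(pderiv ^^ j) ([:0, -1, 1:] ^ n) = [:0, -1, 1:] ^ (n - j) * (r :: real poly)"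
    using dvd_higher_pderiv_rodrigues_base[of j n] assms by (auto elim: dvdE)
  show "poly ((pderiv ^^ j) ([:0, -1, 1:] ^ n)) 0 = (0::real)"
    and "poly ((pderiv ^^ j) ([:0, -1, 1:] ^ n)) 1 = (0::real)"
    unfolding r using assms by (simp_all add: zero_power)
qed

lemma unit_integral_rodrigues_by_parts:
  "j \<le> n \<Longrightarrow> unit_integral ((pderiv ^^ j) ([:0, -1, 1:] ^ n) * g) =
     (-1) ^ j * unit_integral ([:0, -1, 1:] ^ n * (pderiv ^^ j) g)"
proof (induction j arbitrary: g)
  case (Suc j)
  then have "unit_integral ((pderiv ^^ Suc j) ([:0, -1, 1:] ^ n) * g) =
      - unit_integral ((pderiv ^^ j) ([:0, -1, 1:] ^ n) * pderiv g)"
    using unit_integral_by_parts higher_pderiv_rodrigues_base_at_0_1[of j n] by simp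
  also have "\<dots> = (-1) ^ Suc j * unit_integral ([:0, -1, 1:] ^ n * (pderiv ^^ Suc j) g)"
    using Suc by (simp add: funpow_Suc_right del: funpow.simps)
  finally show ?case .
qed simp

lemma coeff_legendre_poly_self:
  "coeff (legendre_poly n) n = sqrt (2 * real n + 1) * fact (2 * n) / (fact n)\<^sup>2"
proof -
  have "coeff (rodrigues_poly n) n = fact (2 * n) / fact n"
    by (simp add: coeff_rodrigues_poly mult_2)
  then show ?thesis
    by (simp add: legendre_poly_def power2_eq_square)
qed

lemma coeff_legendre_poly_self_pos: "coeff (legendre_poly n) n > 0"
  by (simp add: coeff_legendre_poly_self)

lemma degree_legendre_poly: "degree (legendre_poly n) = n"
proof (rule antisym)
  show "degree (legendre_poly n) \<le> n"
    using degree_rodrigues_poly by (simp add: legendre_poly_def)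
  show "n \<le> degree (legendre_poly n)"
    using coeff_legendre_poly_self_pos[of n] by (intro le_degree) simp
qed

lemma legendre_poly_0 [simp]: "legendre_poly 0 = 1"
  by (simp add: legendre_poly_def rodrigues_poly_def)

lemma unit_integral_rodrigues_base:
  "unit_integral ([:0, -1, 1:] ^ n) = (-1) ^ n * fact n * fact n / fact (2 * n + 1)"
proof -
  have "fact (n + n + 1) = (fact (2 * n + 1) :: real)"
    by (simp only: mult_2)
  then show ?thesis
    unfolding rodrigues_base_eq unit_integral_beta by simp
qed

text \<open>n integrations by parts against Rodrigues' formula leave only the top coefficient of q.\<close>
lemma unit_integral_legendre_poly_mult:
  assumes "degree q \<le> n"
  shows "unit_integral (legendre_poly n * q) = coeff q n / coeff (legendre_poly n) n"
proof -
  have "unit_integral (rodrigues_poly n * q) =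
      (-1) ^ n * unit_integral ([:0, -1, 1:] ^ n * [:fact n * coeff q n:])"
    using unit_integral_rodrigues_by_parts[of n n q]
    unfolding rodrigues_poly_def higher_pderiv_degree_le[OF assms] by simp
  also have "\<dots> = ((-1) ^ n * (-1) ^ n) * fact n * coeff q n * (fact n * fact n / fact (2 * n + 1))"
    by (simp add: unit_integral_smult unit_integral_rodrigues_base)
  also have "(-1::real) ^ n * (-1) ^ n = 1"
    by (simp flip: power_add)
  finally have "unit_integral (legendre_poly n * q) =
      sqrt (2 * real n + 1) * fact n * fact n * coeff q n / fact (2 * n + 1)"
    by (simp add: legendre_poly_def unit_integral_smult)
  also have "\<dots> = coeff q n / coeff (legendre_poly n) n"
  proof -
    have *: "S * F * F * c / (S * S * G) = c / (S * G / F\<^sup>2)" if "S \<noteq> 0" for S F G c :: real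
      using that by (simp add: field_simps power2_eq_square)
    have "fact (2 * n + 1) = sqrt (2 * real n + 1) * sqrt (2 * real n + 1) * (fact (2 * n) :: real)"
      by simp
    then show ?thesis
      unfolding coeff_legendre_poly_self by (simp only:) (rule *, simp)
  qed
  finally show ?thesis .
qed

lemma legendre_poly_orthogonal:
  "degree q < n \<Longrightarrow> unit_integral (legendre_poly n * q) = 0"
  using unit_integral_legendre_poly_mult[of q n] by (simp add: coeff_eq_0)

lemma legendre_poly_orthonormal:
  "unit_integral (legendre_poly i * legendre_poly j) = (if i = j then 1 else 0)"
proof (cases i j rule: linorder_cases)
  case less
  then show ?thesis
    using legendre_poly_orthogonal[of "legendre_poly i" j]
    by (simp add: degree_legendre_poly mult.commute)
next
  case equal
  then show ?thesis
    using unit_integral_legendre_poly_mult[of "legendre_poly i" i] coeff_legendre_poly_self_pos[of i]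
    by (simp add: degree_legendre_poly)
next
  case greater
  then show ?thesis
    using legendre_poly_orthogonal[of "legendre_poly j" i] by (simp add: degree_legendre_poly)
qed

lemma legendre_expansion:
  "degree q \<le> n \<Longrightarrow> q = (\<Sum>j\<le>n. smult (unit_integral (legendre_poly j * q)) (legendre_poly j))"
proof (induction n arbitrary: q)
  case 0
  then show ?case
    using unit_integral_legendre_poly_mult[of q 0] by (simp add: degree_0_id)
next
  case (Suc n)
  define r where "r = q - smult (unit_integral (legendre_poly (Suc n) * q)) (legendre_poly (Suc n))"
  have "degree r \<le> n"
  proof (rule degree_le, intro allI impI)
    fix k assume "n < k"
    then consider "k = Suc n" | "Suc n < k"
      by linarith
    then show "coeff r k = 0"
    proof cases
      case 1
      then show ?thesis
        using Suc.prems coeff_legendre_poly_self_pos[of "Suc n"]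
        by (simp add: r_def unit_integral_legendre_poly_mult)
    next
      case 2
      then show ?thesis
        using Suc.prems by (simp add: r_def coeff_eq_0 degree_legendre_poly)
    qed
  qed
  moreover have "unit_integral (legendre_poly j * r) = unit_integral (legendre_poly j * q)"
    if "j \<le> n" for j
    using that
    by (simp add: r_def algebra_simps unit_integral_diff unit_integral_smult legendre_poly_orthonormal)
  ultimately have "r = (\<Sum>j\<le>n. smult (unit_integral (legendre_poly j * q)) (legendre_poly j))"
    using Suc.IH[of r] by simp
  then show ?case
    by (simp add: r_def eq_diff_eq)
qed

section \<open>Integrated Legendre polynomials and the matrix X_s\<close>

definition legendre_antideriv :: "nat \<Rightarrow> real poly" where
  "legendre_antideriv n = poly_antideriv (legendre_poly n)"

lemma pderiv_legendre_antideriv [simp]: "pderiv (legendre_antideriv n) = legendre_poly n"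
  by (simp add: legendre_antideriv_def)

lemma legendre_antideriv_at_0 [simp]: "poly (legendre_antideriv n) 0 = 0"
  by (simp add: legendre_antideriv_def)

lemma intP_eq_poly: "intP n = poly (legendre_antideriv n)"
proof
  fix c :: real
  have "interval_lebesgue_integral lborel (ereal 0) (ereal c) (poly (legendre_poly n)) =
      poly (legendre_antideriv n) c - poly (legendre_antideriv n) 0"
  proof (rule interval_integral_FTC_finite)
    show "continuous_on {min 0 c..max 0 c} (poly (legendre_poly n))"
      by (intro continuous_intros)
    fix x
    show "(poly (legendre_antideriv n) has_vector_derivative poly (legendre_poly n) x)
        (at x within {min 0 c..max 0 c})"
      unfolding has_real_derivative_iff_has_vector_derivative[symmetric]
      using has_field_derivative_at_within[OF poly_DERIV[of "legendre_antideriv n" x]] by simp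
  qed
  then show "intP n c = poly (legendre_antideriv n) c"
    by (simp add: intP_def poly_legendre_poly)
qed

lemma legendre_antideriv_at_1: "poly (legendre_antideriv n) 1 = (if n = 0 then 1 else 0)"
  using unit_integral_pderiv[of "legendre_antideriv n"] legendre_poly_orthonormal[of n 0] by simp

lemma degree_legendre_antideriv: "degree (legendre_antideriv n) \<le> Suc n"
  using degree_poly_antideriv[of "legendre_poly n"]
  by (simp add: legendre_antideriv_def degree_legendre_poly)

lemma coeff_legendre_antideriv_Suc:
  "coeff (legendre_antideriv n) (Suc n) = coeff (legendre_poly n) n / real (Suc n)"
  by (simp add: legendre_antideriv_def coeff_poly_antideriv_Suc del: of_nat_Suc)

lemma coeff_legendre_poly_self_ratio:
  "coeff (legendre_poly j) j / (real (Suc j) * coeff (legendre_poly (Suc j)) (Suc j)) = xi (Suc j)"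
proof -
  define a where "a = (fact j :: real)"
  define b where "b = (fact (2 * j) :: real)"
  define S1 where "S1 = sqrt (2 * real j + 1)"
  define S3 where "S3 = sqrt (2 * real j + 3)"
  define m where "m = real (Suc j)"
  define t where "t = 2 * real j + 1"
  have pos: "a > 0" "b > 0" "S1 > 0" "S3 > 0" "m > 0" "t > 0"
    by (simp_all add: a_def b_def S1_def S3_def m_def t_def)
  have "S1 * S1 = t"
    by (simp add: S1_def t_def)
  have "coeff (legendre_poly j) j = S1 * b / a\<^sup>2"
    by (simp add: coeff_legendre_poly_self S1_def a_def b_def)
  moreover have "coeff (legendre_poly (Suc j)) (Suc j) = S3 * ((2 * m) * (t * b)) / (m * a)\<^sup>2"
    by (simp add: coeff_legendre_poly_self S3_def m_def t_def a_def b_def algebra_simps)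
  moreover have "xi (Suc j) = 1 / (2 * (S1 * S3))"
  proof -
    have "\<bar>4 * (real (Suc j))\<^sup>2 - 1\<bar> = (2 * real j + 1) * (2 * real j + 3)"
      by (simp add: power2_eq_square algebra_simps)
    then show ?thesis
      by (simp add: xi_def S1_def S3_def real_sqrt_mult)
  qed
  moreover have "S1 * b / a\<^sup>2 / (m * (S3 * ((2 * m) * (t * b)) / (m * a)\<^sup>2)) = S1 / (2 * S3 * t)"
    using pos by (simp add: field_simps power2_eq_square)
  moreover have "S1 / (2 * S3 * t) = 1 / (2 * (S1 * S3))"
    using pos \<open>S1 * S1 = t\<close> by (simp add: field_simps)
  ultimately show ?thesis
    by (simp add: m_def)
qed

lemma unit_integral_legendre_antideriv_swap:
  "j \<noteq> 0 \<Longrightarrow> unit_integral (legendre_poly i * legendre_antideriv j) =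
     - unit_integral (legendre_poly j * legendre_antideriv i)"
  using unit_integral_by_parts[of "legendre_antideriv i" "legendre_antideriv j"]
  by (simp add: legendre_antideriv_at_1 mult.commute)

lemma unit_integral_legendre_antideriv_subdiag:
  "unit_integral (legendre_poly (Suc j) * legendre_antideriv j) = xi (Suc j)"
  using unit_integral_legendre_poly_mult[OF degree_legendre_antideriv, of j]
  by (simp add: coeff_legendre_antideriv_Suc flip: coeff_legendre_poly_self_ratio)

lemma unit_integral_legendre_antideriv_below:
  "Suc j < i \<Longrightarrow> unit_integral (legendre_poly i * legendre_antideriv j) = 0"
  using legendre_poly_orthogonal le_less_trans[OF degree_legendre_antideriv] by blast

lemma unit_integral_legendre_antideriv:
  "unit_integral (legendre_poly i * legendre_antideriv j) = Xmat i j"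
proof -
  consider "i = j" | "i = Suc j" | "j = Suc i" | "Suc j < i" | "Suc i < j"
    by linarith
  then show ?thesis
  proof cases
    case 1
    have "2 * unit_integral (legendre_poly i * legendre_antideriv i) = (if i = 0 then 1 else 0)"
      using unit_integral_by_parts[of "legendre_antideriv i" "legendre_antideriv i"]
      by (simp add: legendre_antideriv_at_1 mult.commute)
    then show ?thesis
      using 1 by (cases "i = 0") (simp_all add: Xmat_def xi_def del: legendre_poly_0)
  next
    case 2
    then show ?thesis
      by (simp add: unit_integral_legendre_antideriv_subdiag Xmat_def)
  next
    case 3
    then show ?thesis
      by (simp add: unit_integral_legendre_antideriv_swap unit_integral_legendre_antideriv_subdiag
          Xmat_def)
  next
    case 4
    then show ?thesis
      by (simp add: unit_integral_legendre_antideriv_below Xmat_def)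
  next
    case 5
    then show ?thesis
      by (simp add: unit_integral_legendre_antideriv_swap unit_integral_legendre_antideriv_below
          Xmat_def)
  qed
qed

section \<open>Gauss-Legendre quadrature\<close>

lemma poly_Rolle:
  fixes p :: "real poly"
  assumes "a < b" "poly p a = 0" "poly p b = 0"
  obtains z where "a < z" "z < b" "poly (pderiv p) z = 0"
proof -
  have "\<exists>z. a < z \<and> z < b \<and> DERIV (poly p) z :> 0"
  proof (rule Rolle)
    show "continuous_on {a..b} (poly p)"
      by (intro continuous_intros)
    show "poly p differentiable (at x)" for x
      using poly_DERIV real_differentiable_def by blast
  qed (use assms in auto)
  then show ?thesis
    using that DERIV_unique[OF poly_DERIV] by blast
qed

lemma pderiv_roots_between:
  fixes p :: "real poly"
  assumes "finite S" "card S = Suc m" "\<forall>x\<in>S. poly p x = 0"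
  shows "\<exists>T. finite T \<and> card T = m \<and> T \<subseteq> {Min S<..<Max S} \<and> (\<forall>x\<in>T. poly (pderiv p) x = 0)"
  using assms
proof (induction m arbitrary: S)
  case 0
  then show ?case
    by (intro exI[of _ "{}"]) auto
next
  case (Suc m)
  define a where "a = Min S"
  define S' where "S' = S - {a}"
  have "S \<noteq> {}"
    using Suc.prems by auto
  then have aS: "a \<in> S"
    using Suc.prems by (simp add: a_def)
  have S': "finite S'" "card S' = Suc m"
    using Suc.prems aS by (simp_all add: S'_def)
  then have "S' \<noteq> {}"
    by auto
  obtain T' where T': "finite T'" "card T' = m" "T' \<subseteq> {Min S'<..<Max S'}"
    "\<forall>x\<in>T'. poly (pderiv p) x = 0"
    using Suc.IH[OF S'(1,2)] Suc.prems(3) by (auto simp: S'_def)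
  have bS: "Min S' \<in> S" "Min S' \<noteq> a"
    using Min_in[OF S'(1) \<open>S' \<noteq> {}\<close>] by (auto simp: S'_def)
  then have "a < Min S'"
    using Suc.prems(1) by (simp add: a_def order.not_eq_order_implies_strict)
  then obtain z where z: "a < z" "z < Min S'" "poly (pderiv p) z = 0"
    using poly_Rolle Suc.prems(3) aS bS by metis
  have "Min S \<le> Min S'" "Max S' \<le> Max S" "Min S' \<le> Max S"
    using S' \<open>S' \<noteq> {}\<close> Suc.prems(1) bS by (auto simp: S'_def)
  moreover have "z \<notin> T'"
    using T'(3) z(2) by auto
  ultimately show ?case
    using T' z unfolding a_def
    by (intro exI[of _ "insert z T'"]) auto
qed

lemma higher_pderiv_rodrigues_base_roots:
  "j \<le> n \<Longrightarrow> \<exists>T. finite T \<and> card T = j \<and> T \<subseteq> {0<..<1} \<and>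
     (\<forall>x\<in>T. poly ((pderiv ^^ j) ([:0, -1, 1:] ^ n)) x = (0::real))"
proof (induction j)
  case 0
  then show ?case
    by (intro exI[of _ "{}"]) auto
next
  case (Suc j)
  then obtain T where T: "finite T" "card T = j" "T \<subseteq> {0<..<1}"
    "\<forall>x\<in>T. poly ((pderiv ^^ j) ([:0, -1, 1:] ^ n)) x = (0::real)"
    by auto
  define S where "S = insert 0 (insert (1::real) T)"
  have "0 \<notin> T" "1 \<notin> T"
    using T(3) by auto
  then have S: "finite S" "card S = Suc (Suc j)"
    using T by (simp_all add: S_def)
  have "Min S = 0"
    using T S(1) by (intro Min_eqI) (auto simp: S_def)
  have "Max S = 1"
    using T S(1) by (intro Max_eqI) (auto simp: S_def)
  have "\<forall>x\<in>S. poly ((pderiv ^^ j) ([:0, -1, 1:] ^ n)) x = 0"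
    using T(4) higher_pderiv_rodrigues_base_at_0_1[of j n] Suc.prems by (auto simp: S_def)
  then show ?case
    using pderiv_roots_between[OF S] \<open>Min S = 0\<close> \<open>Max S = 1\<close> by auto
qed

lemma legendre_poly_nonzero: "legendre_poly n \<noteq> 0"
  using coeff_legendre_poly_self_pos[of n] by auto

lemma legP_roots:
  "finite {x. legP n x = 0}" "card {x. legP n x = 0} = n" "{x. legP n x = 0} \<subseteq> {0<..<1}"
proof -
  have roots: "{x. legP n x = 0} = {x. poly (legendre_poly n) x = 0}"
    by (simp add: poly_legendre_poly)
  show fin: "finite {x. legP n x = 0}"
    unfolding roots by (rule poly_roots_finite[OF legendre_poly_nonzero])
  obtain T where T: "finite T" "card T = n" "T \<subseteq> {0<..<1}" "\<forall>x\<in>T. poly (rodrigues_poly n) x = 0"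
    using higher_pderiv_rodrigues_base_roots[of n n] by (auto simp: rodrigues_poly_def)
  have sub: "T \<subseteq> {x. legP n x = 0}"
    using T(4) by (auto simp: roots legendre_poly_def)
  have "card {x. legP n x = 0} \<le> n"
    unfolding roots using card_poly_roots_bound[OF legendre_poly_nonzero]
    by (simp add: degree_legendre_poly)
  then have "T = {x. legP n x = 0}"
    using card_subset_eq[OF fin sub] card_mono[OF fin sub] T(2) by simp
  then show "card {x. legP n x = 0} = n" "{x. legP n x = 0} \<subseteq> {0<..<1}"
    using T(2,3) by auto
qed

lemma gl_node_root: "l < n \<Longrightarrow> legP n (gl_node n l) = 0"
  using nth_mem[of l "sorted_list_of_set {x. legP n x = 0}"] legP_roots[of n]
  by (simp add: gl_node_def)

lemma gl_node_in_unit: "l < n \<Longrightarrow> gl_node n l \<in> {0..1}"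
  using nth_mem[of l "sorted_list_of_set {x. legP n x = 0}"] legP_roots[of n]
  by (auto simp: gl_node_def)

lemma gl_node_inj: "l < n \<Longrightarrow> m < n \<Longrightarrow> gl_node n l = gl_node n m \<Longrightarrow> l = m"
  using legP_roots[of n] distinct_sorted_list_of_set[of "{x. legP n x = 0}"]
  by (simp add: gl_node_def nth_eq_iff_index_eq)

definition gl_lagrange :: "nat \<Rightarrow> nat \<Rightarrow> real poly" where
  "gl_lagrange n l = (\<Prod>j\<in>{0..<n} - {l}.
     [:- gl_node n j / (gl_node n l - gl_node n j), 1 / (gl_node n l - gl_node n j):])"

lemma poly_gl_lagrange:
  assumes "l < n"
  shows "poly (gl_lagrange n l) = (\<lambda>x. \<Prod>j\<in>{0..<n} - {l}. (x - gl_node n j) / (gl_node n l - gl_node n j))"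
proof
  fix x
  have "gl_node n l - gl_node n j \<noteq> 0" if "j \<in> {0..<n} - {l}" for j
    using gl_node_inj[of l n j] assms that by auto
  then show "poly (gl_lagrange n l) x = (\<Prod>j\<in>{0..<n} - {l}. (x - gl_node n j) / (gl_node n l - gl_node n j))"
    unfolding gl_lagrange_def poly_prod by (intro prod.cong refl) (simp add: diff_divide_distrib)
qed

lemma gl_weight_eq_unit_integral: "l < n \<Longrightarrow> gl_weight n l = unit_integral (gl_lagrange n l)"
  by (simp add: gl_weight_def unit_integral_def poly_gl_lagrange)

lemma poly_gl_lagrange_node:
  assumes "l < n" "m < n"
  shows "poly (gl_lagrange n l) (gl_node n m) = (if m = l then 1 else 0)"
proof (cases "m = l")
  case True
  have "gl_node n l - gl_node n j \<noteq> 0" if "j \<in> {0..<n} - {l}" for j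
    using gl_node_inj[of l n j] assms that by auto
  then show ?thesis
    using True assms by (simp add: poly_gl_lagrange)
next
  case False
  then show ?thesis
    using assms by (auto simp: poly_gl_lagrange intro: prod_zero)
qed

lemma degree_gl_lagrange: "l < n \<Longrightarrow> degree (gl_lagrange n l) \<le> n - 1"
proof -
  assume "l < n"
  have "degree (gl_lagrange n l) \<le> (\<Sum>j\<in>{0..<n} - {l}.
      degree [:- gl_node n j / (gl_node n l - gl_node n j), 1 / (gl_node n l - gl_node n j):])"
    unfolding gl_lagrange_def by (rule order_trans[OF degree_prod_sum_le]) simp_all
  also have "\<dots> \<le> (\<Sum>j\<in>{0..<n} - {l}. 1)"
    by (intro sum_mono) simp
  also have "\<dots> = n - 1"
    using \<open>l < n\<close> by simp
  finally show ?thesis .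
qed

lemma gl_lagrange_interpolation:
  assumes "degree r \<le> n - 1" "0 < n"
  shows "r = (\<Sum>l<n. smult (poly r (gl_node n l)) (gl_lagrange n l))"
proof (rule ccontr)
  define d where "d = r - (\<Sum>l<n. smult (poly r (gl_node n l)) (gl_lagrange n l))"
  assume "r \<noteq> (\<Sum>l<n. smult (poly r (gl_node n l)) (gl_lagrange n l))"
  then have "d \<noteq> 0"
    by (simp add: d_def)
  have "degree d \<le> n - 1"
    unfolding d_def using assms(1)
    by (intro degree_diff_le degree_sum_le)
       (auto intro: order_trans[OF degree_smult_le] dest: degree_gl_lagrange)
  then have "card {x. poly d x = 0} \<le> n - 1"
    using card_poly_roots_bound[OF \<open>d \<noteq> 0\<close>] by linarith
  moreover have "gl_node n ` {..<n} \<subseteq> {x. poly d x = 0}"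
  proof clarsimp
    fix m assume "m < n"
    then have "(\<Sum>l<n. poly r (gl_node n l) * poly (gl_lagrange n l) (gl_node n m)) = poly r (gl_node n m)"
      by (simp add: poly_gl_lagrange_node if_distrib cong: if_cong)
    then show "poly d (gl_node n m) = 0"
      by (simp add: d_def poly_sum)
  qed
  moreover have "card (gl_node n ` {..<n}) = n"
    by (subst card_image) (auto intro: inj_onI gl_node_inj)
  ultimately show False
    using card_mono[OF poly_roots_finite[OF \<open>d \<noteq> 0\<close>]] assms(2)
    by (metis diff_less le_trans not_le zero_less_one)
qed

text \<open>Divide q by P_n: the quotient has degree < n, so it is orthogonal to P_n, and the
  remainder is interpolated exactly at the n roots of P_n.\<close>
theorem gauss_legendre_exact:
  assumes "0 < n" "degree q \<le> 2 * n - 1"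
  shows "(\<Sum>l<n. gl_weight n l * poly q (gl_node n l)) = unit_integral q"
proof -
  define P where "P = legendre_poly n"
  define d where "d = q div P"
  define r where "r = q mod P"
  have P: "P \<noteq> 0" "degree P = n"
    by (simp_all add: P_def legendre_poly_nonzero degree_legendre_poly)
  have q: "q = d * P + r"
    by (simp add: d_def r_def)
  have "degree r \<le> n - 1"
    using degree_mod_less[OF P(1), of q] P(2) assms(1) by (auto simp: r_def)
  have "degree d < n"
  proof (cases "d = 0")
    case False
    have "degree (d * P) = degree (q - r)"
      using q by (simp add: algebra_simps)
    then have "degree d + n \<le> 2 * n - 1"
      using False P \<open>degree r \<le> n - 1\<close> assms(2) degree_diff_le[of q "2 * n - 1" r]
      by (simp add: degree_mult_eq)
    then show ?thesis
      using assms(1) by linarith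
  qed (use assms(1) in simp)
  then have "unit_integral q = unit_integral r"
    using legendre_poly_orthogonal[of d n] q by (simp add: P_def unit_integral_add mult.commute)
  also have "\<dots> = (\<Sum>l<n. poly r (gl_node n l) * unit_integral (gl_lagrange n l))"
    by (subst gl_lagrange_interpolation[OF \<open>degree r \<le> n - 1\<close> assms(1)])
       (simp add: unit_integral_sum unit_integral_smult)
  also have "\<dots> = (\<Sum>l<n. gl_weight n l * poly q (gl_node n l))"
    using gl_node_root
    by (intro sum.cong refl) (simp add: q P_def poly_legendre_poly gl_weight_eq_unit_integral)
  finally show ?thesis ..
qed

section \<open>The LIM(k,s) equations and equation (D)\<close>

lemma legP_0 [simp]: "legP 0 x = 1"
  by (simp flip: poly_legendre_poly)

lemma intP_0 [simp]: "intP 0 c = c"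
proof -
  have "legendre_antideriv 0 = monom 1 1"
    by (simp add: legendre_antideriv_def poly_antideriv_def)
  then show ?thesis
    by (simp add: intP_eq_poly poly_monom)
qed

lemma intP_1: "intP i 1 = (if i = 0 then 1 else 0)"
  by (simp add: intP_eq_poly legendre_antideriv_at_1)

lemma gl_sum_legP:
  assumes "i < n"
  shows "(\<Sum>l<n. gl_weight n l * legP i (gl_node n l)) = (if i = 0 then 1 else 0)"
  using gauss_legendre_exact[of n "legendre_poly i"] legendre_poly_orthonormal[of i 0] assms
  by (simp add: degree_legendre_poly poly_legendre_poly)

lemma gl_sum_legP_intP:
  assumes "i < n" "j < n"
  shows "(\<Sum>l<n. gl_weight n l * legP i (gl_node n l) * intP j (gl_node n l)) = Xmat i j"
proof -
  have "degree (legendre_poly i * legendre_antideriv j) \<le> 2 * n - 1"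
    using degree_mult_le[of "legendre_poly i" "legendre_antideriv j"]
      degree_legendre_poly[of i] degree_legendre_antideriv[of j] assms by linarith
  then show ?thesis
    using gauss_legendre_exact[of n "legendre_poly i * legendre_antideriv j"] assms
    by (simp add: poly_legendre_poly intP_eq_poly unit_integral_legendre_antideriv mult.assoc)
qed

text \<open>Expand \<integral>_0^c P_m in the Legendre basis up to degree s; the P_s term vanishes at
  the nodes.\<close>
lemma intP_gl_node_expansion:
  assumes "m < s" "l < s"
  shows "intP m (gl_node s l) = (\<Sum>j<s. legP j (gl_node s l) * Xmat j m)"
proof -
  have "legendre_antideriv m = (\<Sum>j\<le>s. smult (Xmat j m) (legendre_poly j))"
    using legendre_expansion[of "legendre_antideriv m" s] degree_legendre_antideriv[of m] assms(1)
    by (simp add: unit_integral_legendre_antideriv)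
  then have "intP m (gl_node s l) = (\<Sum>j\<le>s. Xmat j m * legP j (gl_node s l))"
    by (simp add: intP_eq_poly poly_sum poly_legendre_poly)
  also have "\<dots> = (\<Sum>j<s. Xmat j m * legP j (gl_node s l))"
    using gl_node_root[OF assms(2)] by (simp add: lessThan_Suc_atMost[symmetric])
  finally show ?thesis
    by (simp add: mult.commute)
qed

lemma sum_Xmat_row_0:
  fixes psi :: "nat \<Rightarrow> 'v::real_vector"
  assumes "2 \<le> s"
  shows "(\<Sum>j<s. Xmat 0 j *\<^sub>R psi j) = (1 / 2) *\<^sub>R psi 0 - (1 / (2 * sqrt 3)) *\<^sub>R psi 1"
proof -
  have "(\<Sum>j<s. Xmat 0 j *\<^sub>R psi j) = (\<Sum>j\<in>{0, 1}. Xmat 0 j *\<^sub>R psi j)"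
    using assms by (intro sum.mono_neutral_right) (auto simp: Xmat_def)
  then show ?thesis
    by (simp add: Xmat_def xi_def)
qed

lemma sum_scaleR_affine_swap:
  fixes x :: "'b \<Rightarrow> 'v::real_vector"
  assumes "finite A" "finite B"
  shows "(\<Sum>l\<in>A. a l *\<^sub>R (p l + h *\<^sub>R (\<Sum>j\<in>B. b l j *\<^sub>R x j))) =
         (\<Sum>l\<in>A. a l *\<^sub>R p l) + h *\<^sub>R (\<Sum>j\<in>B. (\<Sum>l\<in>A. a l * b l j) *\<^sub>R x j)"
proof -
  have "(\<Sum>l\<in>A. a l *\<^sub>R (p l + h *\<^sub>R (\<Sum>j\<in>B. b l j *\<^sub>R x j))) =
        (\<Sum>l\<in>A. a l *\<^sub>R p l) + (\<Sum>l\<in>A. \<Sum>j\<in>B. (h * (a l * b l j)) *\<^sub>R x j)"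
    by (simp add: scaleR_add_right sum.distrib scaleR_sum_right mult_ac)
  also have "(\<Sum>l\<in>A. \<Sum>j\<in>B. (h * (a l * b l j)) *\<^sub>R x j) = h *\<^sub>R (\<Sum>j\<in>B. (\<Sum>l\<in>A. a l * b l j) *\<^sub>R x j)"
    by (subst sum.swap) (simp add: scaleR_sum_right scaleR_sum_left)
  finally show ?thesis .
qed

lemma sum_scaleR_if_0:
  fixes p :: "'v::real_vector" and s :: nat
  assumes "0 < s"
  shows "(\<Sum>i<s. a i *\<^sub>R (if i = 0 then p else 0)) = a 0 *\<^sub>R p"
  using assms by (simp add: if_distrib[of "scaleR _"] cong: if_cong)

lemma matrix_vector_mult_sum_left:
  "(\<Sum>l\<in>A. f l :: real^'m^'n) *v x = (\<Sum>l\<in>A. f l *v x)"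
  by (induction A rule: infinite_finite_induct) (simp_all add: matrix_vector_mult_add_rdistrib)

lemma matrix_vector_mult_sum_right:
  "(M :: real^'m^'n) *v (\<Sum>l\<in>A. f l) = (\<Sum>l\<in>A. M *v f l)"
  by (induction A rule: infinite_finite_induct) (simp_all add: matrix_vector_right_distrib)

definition gamma_of_psi :: "nat \<Rightarrow> real \<Rightarrow> 'v::real_vector \<Rightarrow> (nat \<Rightarrow> 'v) \<Rightarrow> nat \<Rightarrow> 'v" where
  "gamma_of_psi s h p0 psi i = (if i = 0 then p0 else 0) + h *\<^sub>R (\<Sum>j<s. Xmat i j *\<^sub>R psi j)"

definition eqD_rhs :: "(real^'m \<Rightarrow> real^'m) \<Rightarrow> (real^'m \<Rightarrow> real^'m^'m) \<Rightarrow> nat \<Rightarrow> nat \<Rightarrow> real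
    \<Rightarrow> real^'m \<Rightarrow> real^'m \<Rightarrow> (nat \<Rightarrow> real^'m) \<Rightarrow> nat \<Rightarrow> real^'m" where
  "eqD_rhs gU B k s h q0 p0 psi i =
     (\<Sum>l<s. (gl_weight s l * legP i (gl_node s l)) *\<^sub>R
        (B (q0 + (h * gl_node s l) *\<^sub>R p0 + h^2 *\<^sub>R (\<Sum>j<s. IX s s l j *\<^sub>R psi j))
         *v (p0 + h *\<^sub>R (\<Sum>j<s. intP j (gl_node s l) *\<^sub>R psi j))))
   - (\<Sum>l<k. (gl_weight k l * legP i (gl_node k l)) *\<^sub>R
        gU (q0 + (h * gl_node k l) *\<^sub>R p0 + h^2 *\<^sub>R (\<Sum>j<s. IX k s l j *\<^sub>R psi j)))"

lemma eqD_iff_rhs: "eqD gU B k s h q0 p0 psi \<longleftrightarrow> (\<forall>i<s. psi i = eqD_rhs gU B k s h q0 p0 psi i)"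
  by (simp add: eqD_def eqD_rhs_def)

lemma gam_hat_collocation:
  assumes "i < s"
    and v: "\<forall>c\<in>{0..1}. v (c * h) = p0 + h *\<^sub>R (\<Sum>j<s. intP j c *\<^sub>R psi j)"
  shows "gam_hat s h v i = gamma_of_psi s h p0 psi i"
proof -
  have "gam_hat s h v i = (\<Sum>l<s. (gl_weight s l * legP i (gl_node s l)) *\<^sub>R
          (p0 + h *\<^sub>R (\<Sum>j<s. intP j (gl_node s l) *\<^sub>R psi j)))"
    unfolding gam_hat_def using v gl_node_in_unit by simp
  also have "\<dots> = (\<Sum>l<s. gl_weight s l * legP i (gl_node s l)) *\<^sub>R p0 +
     h *\<^sub>R (\<Sum>j<s. (\<Sum>l<s. gl_weight s l * legP i (gl_node s l) * intP j (gl_node s l)) *\<^sub>R psi j)"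
    by (simp add: sum_scaleR_affine_swap scaleR_sum_left)
  also have "\<dots> = gamma_of_psi s h p0 psi i"
    using assms(1) by (simp add: gl_sum_legP gl_sum_legP_intP gamma_of_psi_def)
  finally show ?thesis .
qed

lemma sum_intP_gamma_of_psi:
  assumes "0 < s"
  shows "(\<Sum>i<s. intP i c *\<^sub>R gamma_of_psi s h p0 psi i) =
    c *\<^sub>R p0 + h *\<^sub>R (\<Sum>j<s. (\<Sum>r<s. intP r c * Xmat r j) *\<^sub>R psi j)"
  unfolding gamma_of_psi_def using assms by (simp add: sum_scaleR_affine_swap sum_scaleR_if_0)

lemma sum_legP_gamma_of_psi_at_gl_node:
  assumes "0 < s" "l < s"
  shows "(\<Sum>j<s. legP j (gl_node s l) *\<^sub>R gamma_of_psi s h p0 psi j) =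
    p0 + h *\<^sub>R (\<Sum>m<s. intP m (gl_node s l) *\<^sub>R psi m)"
  unfolding gamma_of_psi_def using assms
  by (simp add: sum_scaleR_affine_swap sum_scaleR_if_0 intP_gl_node_expansion)

lemma quadrature_rhs_collocation:
  assumes "i < s"
    and v: "\<forall>c\<in>{0..1}. v (c * h) = p0 + h *\<^sub>R (\<Sum>j<s. intP j c *\<^sub>R psi j)"
    and u: "\<forall>c\<in>{0..1}. u (c * h) = q0 + h *\<^sub>R (\<Sum>j<s. intP j c *\<^sub>R gamma_of_psi s h p0 psi j)"
  shows "(\<Sum>j<s. rho_hat B s h u i j *v gam_hat s h v j) - eta_hat gU k h u i =
    eqD_rhs gU B k s h q0 p0 psi i"
proof -
  have "0 < s"
    using assms(1) by simp
  have u_node: "u (gl_node n l * h) =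
      q0 + (h * gl_node n l) *\<^sub>R p0 + h\<^sup>2 *\<^sub>R (\<Sum>j<s. IX n s l j *\<^sub>R psi j)" if "l < n" for n l
  proof -
    have "u (gl_node n l * h) =
        q0 + h *\<^sub>R (\<Sum>j<s. intP j (gl_node n l) *\<^sub>R gamma_of_psi s h p0 psi j)"
      using u gl_node_in_unit[OF that] by blast
    then show ?thesis
      unfolding sum_intP_gamma_of_psi[OF \<open>0 < s\<close>] IX_def
      by (simp add: scaleR_add_right power2_eq_square)
  qed
  define w where "w l = gl_weight s l * legP i (gl_node s l)" for l
  have "(\<Sum>j<s. rho_hat B s h u i j *v gam_hat s h v j) =
      (\<Sum>j<s. \<Sum>l<s. (w l * legP j (gl_node s l)) *\<^sub>R
         (B (u (gl_node s l * h)) *v gamma_of_psi s h p0 psi j))"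
    using gam_hat_collocation[OF _ v]
    by (simp add: rho_hat_def w_def matrix_vector_mult_sum_left flip: scaleR_matrix_vector_assoc)
  also have "\<dots> = (\<Sum>l<s. w l *\<^sub>R (B (u (gl_node s l * h)) *v
      (\<Sum>j<s. legP j (gl_node s l) *\<^sub>R gamma_of_psi s h p0 psi j)))"
    by (subst sum.swap)
       (simp add: matrix_vector_mult_sum_right matrix_vector_mult_scaleR scaleR_sum_right)
  also have "\<dots> = (\<Sum>l<s. w l *\<^sub>R
      (B (q0 + (h * gl_node s l) *\<^sub>R p0 + h\<^sup>2 *\<^sub>R (\<Sum>j<s. IX s s l j *\<^sub>R psi j))
       *v (p0 + h *\<^sub>R (\<Sum>j<s. intP j (gl_node s l) *\<^sub>R psi j))))"
    by (intro sum.cong refl) (simp add: u_node sum_legP_gamma_of_psi_at_gl_node[OF \<open>0 < s\<close>])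
  moreover have "eta_hat gU k h u i = (\<Sum>l<k. (gl_weight k l * legP i (gl_node k l)) *\<^sub>R
      gU (q0 + (h * gl_node k l) *\<^sub>R p0 + h\<^sup>2 *\<^sub>R (\<Sum>j<s. IX k s l j *\<^sub>R psi j)))"
    unfolding eta_hat_def by (intro sum.cong refl) (simp add: u_node)
  ultimately show ?thesis
    by (simp add: eqD_rhs_def w_def)
qed

lemma sum_intP_1:
  fixes f :: "nat \<Rightarrow> 'v::real_vector" and s :: nat
  assumes "0 < s"
  shows "(\<Sum>i<s. intP i 1 *\<^sub>R f i) = f 0"
proof -
  have "(\<Sum>i<s. intP i 1 *\<^sub>R f i) = (\<Sum>i<s. if i = 0 then f 0 else 0)"
    by (intro sum.cong) (auto simp: intP_1)
  also have "\<dots> = f 0"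
    by (subst sum.delta) (use assms in auto)
  finally show ?thesis .
qed

lemma LIM_eqs_imp_eqD:
  assumes "2 \<le> s" and lim: "LIM_eqs gU B k s h q0 p0 u v"
  defines "psi \<equiv> \<lambda>i. (\<Sum>j<s. rho_hat B s h u i j *v gam_hat s h v j) - eta_hat gU k h u i"
  shows "eqD gU B k s h q0 p0 psi"
    and "u h = q0 + h *\<^sub>R p0 + (h\<^sup>2 / 2) *\<^sub>R (psi 0 - (1 / sqrt 3) *\<^sub>R psi 1)"
    and "v h = p0 + h *\<^sub>R psi 0"
proof -
  have "0 < s"
    using assms(1) by simp
  have v: "\<forall>c\<in>{0..1}. v (c * h) = p0 + h *\<^sub>R (\<Sum>i<s. intP i c *\<^sub>R psi i)"
    using lim by (simp add: LIM_eqs_def psi_def algebra_simps)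
  then have "gam_hat s h v i = gamma_of_psi s h p0 psi i" if "i < s" for i
    using gam_hat_collocation that by blast
  then have u: "\<forall>c\<in>{0..1}. u (c * h) = q0 + h *\<^sub>R (\<Sum>i<s. intP i c *\<^sub>R gamma_of_psi s h p0 psi i)"
    using lim by (simp add: LIM_eqs_def)
  show "eqD gU B k s h q0 p0 psi"
    unfolding eqD_iff_rhs using quadrature_rhs_collocation[OF _ v u] by (simp add: psi_def)
  show "v h = p0 + h *\<^sub>R psi 0"
    using v[rule_format, of 1] by (simp add: sum_intP_1[OF \<open>0 < s\<close>])
  have "u h = q0 + h *\<^sub>R gamma_of_psi s h p0 psi 0"
    using u[rule_format, of 1] by (simp add: sum_intP_1[OF \<open>0 < s\<close>])
  then show "u h = q0 + h *\<^sub>R p0 + (h\<^sup>2 / 2) *\<^sub>R (psi 0 - (1 / sqrt 3) *\<^sub>R psi 1)"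
    unfolding gamma_of_psi_def sum_Xmat_row_0[OF assms(1)]
    by (simp add: algebra_simps power2_eq_square)
qed

lemma is_vpoly_poly_combination:
  fixes g :: "'i \<Rightarrow> 'v::real_vector"
  assumes "finite I" "\<forall>i\<in>I. degree (p i) \<le> n"
  shows "is_vpoly n (\<lambda>t. x0 + h *\<^sub>R (\<Sum>i\<in>I. poly (p i) (t / h) *\<^sub>R g i))"
  unfolding is_vpoly_def
proof (intro exI allI)
  fix t
  define a where "a j = (if j = 0 then x0 else 0) + h *\<^sub>R (\<Sum>i\<in>I. (coeff (p i) j / h ^ j) *\<^sub>R g i)" for j
  have "(\<Sum>j\<le>n. t ^ j *\<^sub>R a j) = (\<Sum>j\<le>n. t ^ j *\<^sub>R (if j = 0 then x0 else 0)) +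
      (\<Sum>j\<le>n. t ^ j *\<^sub>R (h *\<^sub>R (\<Sum>i\<in>I. (coeff (p i) j / h ^ j) *\<^sub>R g i)))"
    by (simp add: a_def scaleR_add_right sum.distrib)
  also have "(\<Sum>j\<le>n. t ^ j *\<^sub>R (if j = 0 then x0 else 0)) = x0"
    by (simp add: if_distrib[of "\<lambda>x. t ^ _ *\<^sub>R x"] cong: if_cong)
  also have "(\<Sum>j\<le>n. t ^ j *\<^sub>R (h *\<^sub>R (\<Sum>i\<in>I. (coeff (p i) j / h ^ j) *\<^sub>R g i)))
       = h *\<^sub>R (\<Sum>i\<in>I. (\<Sum>j\<le>n. coeff (p i) j * (t / h) ^ j) *\<^sub>R g i)"
    by (simp add: scaleR_sum_right scaleR_sum_left sum.swap[of _ "{..n}" I] power_divide mult_ac)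
  also have "\<dots> = h *\<^sub>R (\<Sum>i\<in>I. poly (p i) (t / h) *\<^sub>R g i)"
    using assms(2) by (intro arg_cong[where f="\<lambda>z. h *\<^sub>R z"] sum.cong refl)
      (simp add: poly_as_sum_coeff_le[symmetric])
  finally show "x0 + h *\<^sub>R (\<Sum>i\<in>I. poly (p i) (t / h) *\<^sub>R g i) = (\<Sum>j\<le>n. t ^ j *\<^sub>R a j)"
    by simp
qed

lemma is_vpoly_intP_combination:
  "is_vpoly s (\<lambda>t. x0 + h *\<^sub>R (\<Sum>i<s. intP i (t / h) *\<^sub>R g i))"
  unfolding intP_eq_poly
  by (rule is_vpoly_poly_combination) (auto intro: order_trans[OF degree_legendre_antideriv])

lemma eqD_imp_LIM_eqs:
  assumes "h \<noteq> 0" and D: "eqD gU B k s h q0 p0 psi"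
  defines "u \<equiv> \<lambda>t. q0 + h *\<^sub>R (\<Sum>i<s. intP i (t / h) *\<^sub>R gamma_of_psi s h p0 psi i)"
    and "v \<equiv> \<lambda>t. p0 + h *\<^sub>R (\<Sum>i<s. intP i (t / h) *\<^sub>R psi i)"
  shows "LIM_eqs gU B k s h q0 p0 u v"
proof -
  have v: "\<forall>c\<in>{0..1}. v (c * h) = p0 + h *\<^sub>R (\<Sum>i<s. intP i c *\<^sub>R psi i)"
    using assms(1) by (simp add: v_def)
  have u: "\<forall>c\<in>{0..1}. u (c * h) = q0 + h *\<^sub>R (\<Sum>i<s. intP i c *\<^sub>R gamma_of_psi s h p0 psi i)"
    using assms(1) by (simp add: u_def)
  have gam: "gam_hat s h v i = gamma_of_psi s h p0 psi i" if "i < s" for i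
    using gam_hat_collocation[OF that v] .
  have rhs: "- eta_hat gU k h u i + (\<Sum>j<s. rho_hat B s h u i j *v gam_hat s h v j) = psi i"
    if "i < s" for i
    using quadrature_rhs_collocation[OF that v u] D that by (simp add: eqD_iff_rhs algebra_simps)
  show ?thesis
    unfolding LIM_eqs_def
  proof (intro ballI conjI)
    fix c :: real assume "c \<in> {0..1}"
    have "(\<Sum>i<s. intP i c *\<^sub>R gam_hat s h v i) = (\<Sum>i<s. intP i c *\<^sub>R gamma_of_psi s h p0 psi i)"
      by (intro sum.cong refl) (simp add: gam)
    then show "u (c * h) = q0 + h *\<^sub>R (\<Sum>i<s. intP i c *\<^sub>R gam_hat s h v i)"
      using u \<open>c \<in> {0..1}\<close> by simp
    have "(\<Sum>i<s. intP i c *\<^sub>R (- eta_hat gU k h u i + (\<Sum>j<s. rho_hat B s h u i j *v gam_hat s h v j))) =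
        (\<Sum>i<s. intP i c *\<^sub>R psi i)"
      by (intro sum.cong refl) (simp only: rhs lessThan_iff)
    then show "v (c * h) = p0 + h *\<^sub>R (\<Sum>i<s. intP i c *\<^sub>R
        (- eta_hat gU k h u i + (\<Sum>j<s. rho_hat B s h u i j *v gam_hat s h v j)))"
      using v \<open>c \<in> {0..1}\<close> by simp
  qed
qed

theorem mainTheorem8:
  fixes U :: "real^'m \<Rightarrow> real" and gU :: "real^'m \<Rightarrow> real^'m"
    and B :: "real^'m \<Rightarrow> real^'m^'m"
    and s k :: nat and h :: real and q0 p0 :: "real^'m"
  assumes "2 \<le> s" and "s \<le> k" and "h > 0"
    and U_grad: "\<And>x. (U has_derivative (\<lambda>d. gU x \<bullet> d)) (at x)"
    and gU_cont: "continuous_on UNIV gU"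
    and B_cont: "continuous_on UNIV B"
    and B_skew: "\<And>q. transpose (B q) = - B q"
  shows "(\<forall>u v. is_vpoly s u \<and> is_vpoly s v \<and> LIM_eqs gU B k s h q0 p0 u v \<longrightarrow>
            (let psi = (\<lambda>i. (\<Sum>j<s. rho_hat B s h u i j *v gam_hat s h v j) - eta_hat gU k h u i)
             in eqD gU B k s h q0 p0 psi \<and>
                u h = q0 + h *\<^sub>R p0 + (h^2 / 2) *\<^sub>R (psi 0 - (1 / sqrt 3) *\<^sub>R psi 1) \<and>
                v h = p0 + h *\<^sub>R psi 0))
       \<and> (\<forall>psi. eqD gU B k s h q0 p0 psi \<longrightarrow>
            (let gam = (\<lambda>i. (if i = 0 then p0 else 0) + h *\<^sub>R (\<Sum>j<s. Xmat i j *\<^sub>R psi j));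
                 u = (\<lambda>t. q0 + h *\<^sub>R (\<Sum>i<s. intP i (t / h) *\<^sub>R gam i));
                 v = (\<lambda>t. p0 + h *\<^sub>R (\<Sum>i<s. intP i (t / h) *\<^sub>R psi i))
             in is_vpoly s u \<and> is_vpoly s v \<and> LIM_eqs gU B k s h q0 p0 u v))"
  apply (intro conjI allI impI)
  subgoal for u v
    using LIM_eqs_imp_eqD[OF \<open>2 \<le> s\<close>, of gU B k h q0 p0 u v] by (auto simp: Let_def)
  subgoal for psi
    using eqD_imp_LIM_eqs[of h gU B k s q0 p0 psi] \<open>h > 0\<close>
      is_vpoly_intP_combination[of s q0 h "gamma_of_psi s h p0 psi"]
      is_vpoly_intP_combination[of s p0 h psi]
    by (simp add: Let_def gamma_of_psi_def)
  done

end
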